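(* Every Fréchet–Urysohn topological group $G$ has the property (PS).
   Context: A topological group $G$ (with unit $e$) has property (PS) if for every sequence $(g_n)_{n\in\mathbb{N}}$ in $G$ converging to $e$ there are strictly increasing sequences $(m_k)$ and $(n_k)$ of natural numbers such that $g_{n_k}^{m_k}\to e$, where $g^m=g\cdots g$ ($m$ times). A space is Fréchet–Urysohn if whenever $x\in\overline{A}$ there is a sequence in $A$ converging to $x$. *)

theory Defs
  imports "HOL-Analysis.Analysis" "HOL-Algebra.Group"
begin

definition topological_group :: "('a, 'b) monoid_scheme \<Rightarrow> 'a topology \<Rightarrow> bool" where
  "topological_group G T \<longleftrightarrow>
     group G \<and> topspace T = carrier G \<and>
     continuous_map (prod_topology T T) T (\<lambda>(x, y). x \<otimes>\<^bsub>G\<^esub> y) \<and>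
     continuous_map T T (\<lambda>x. inv\<^bsub>G\<^esub> x)"

definition Frechet_Urysohn_space :: "'a topology \<Rightarrow> bool" where
  "Frechet_Urysohn_space T \<longleftrightarrow>
     (\<forall>A x. A \<subseteq> topspace T \<and> x \<in> T closure_of A \<longrightarrow>
        (\<exists>s. (\<forall>n. s n \<in> A) \<and> limitin T s x sequentially))"

definition property_PS :: "('a, 'b) monoid_scheme \<Rightarrow> 'a topology \<Rightarrow> bool" where
  "property_PS G T \<longleftrightarrow>
     (\<forall>g. (\<forall>n. g n \<in> carrier G) \<and> limitin T g \<one>\<^bsub>G\<^esub> sequentially \<longrightarrow>
        (\<exists>m k. strict_mono (m :: nat \<Rightarrow> nat) \<and> strict_mono (k :: nat \<Rightarrow> nat) \<and>
           limitin T (\<lambda>i. g (k i) [^]\<^bsub>G\<^esub> m i) \<one>\<^bsub>G\<^esub> sequentially))"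

end

theory Submission
  imports Defs
begin

text \<open>
  Let \<open>g\<^sub>n \<rightarrow> 1\<close>. As \<open>T\<close> need not be T1, some \<open>g\<^sub>n\<close> may lie in every neighbourhood
  of 1, i.e. the constant sequence at \<open>g\<^sub>n\<close> converges to 1. If infinitely many do, so do
  all their powers, and \<open>g\<^sub>k\<^sub>i ^ i \<rightarrow> 1\<close> along them.

  Otherwise none does from some \<open>n\<^sub>0\<close> on. For fixed \<open>m\<close> the twisted powers \<open>g\<^sub>n ^ m * g\<^sub>m\<close>
  converge to \<open>g\<^sub>m\<close> as \<open>n \<rightarrow> \<infinity>\<close>, and eventually none of them lies in every
  neighbourhood of 1; so 1 is in the closure of the set of those with \<open>n\<^sub>0 \<le> m < n\<close> that
  do not. Frechet-Urysohn gives \<open>g\<^sub>N\<^sub>k ^ M\<^sub>k * g\<^sub>M\<^sub>k \<rightarrow> 1\<close> with terms from this set. Each of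
  its values occurs only finitely often, so \<open>N\<^sub>k \<rightarrow> \<infinity>\<close>; a value \<open>m\<close> taken infinitely often
  by \<open>M\<^sub>k\<close> would put \<open>g\<^sub>m\<close> into every neighbourhood of 1, so \<open>M\<^sub>k \<rightarrow> \<infinity>\<close> too. Along a
  subsequence on which both increase, \<open>g\<^sub>N\<^sub>k ^ M\<^sub>k = (g\<^sub>N\<^sub>k ^ M\<^sub>k * g\<^sub>M\<^sub>k) * g\<^sub>M\<^sub>k\<inverse> \<rightarrow> 1\<close>.
\<close>

lemma limitin_compose_filterlim:
  assumes "limitin X f l F" and "filterlim h F G"
  shows "limitin X (f \<circ> h) l G"
  using assms by (auto simp: limitin_def filterlim_iff)

lemma limitin_if_const_limits:
  assumes "\<And>i. limitin X (\<lambda>_. f i) l sequentially"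
  shows "limitin X f l F"
  using assms[of undefined] assms by (simp add: limitin_def)

lemma limitin_const_if_frequently_eq:
  assumes "limitin X f l sequentially" and "frequently (\<lambda>k. f k = a) sequentially"
  shows "limitin X (\<lambda>_. a) l sequentially"
proof -
  have "a \<in> U" if "openin X U" "l \<in> U" for U
  proof -
    have "eventually (\<lambda>k. f k \<in> U) sequentially"
      using assms(1) that by (rule limitinD)
    with assms(2) have "frequently (\<lambda>k. f k = a \<and> f k \<in> U) sequentially"
      by (rule frequently_eventually_frequently)
    then show ?thesis by (auto dest: frequently_ex)
  qed
  with limitin_topspace[OF assms(1)] show ?thesis
    by (simp add: limitin_def)
qed

lemma finite_visits_if_no_const_limit:
  assumes "limitin X f l sequentially" and "finite Y"
    and "\<And>a. a \<in> Y \<Longrightarrow> \<not> limitin X (\<lambda>_. a) l sequentially"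
  shows "finite {k. f k \<in> Y}"
proof -
  have "finite {k. f k = a}" if "a \<in> Y" for a
    using limitin_const_if_frequently_eq[OF assms(1), of a] assms(3)[OF that]
    by (auto simp: frequently_cofinite cofinite_eq_sequentially[symmetric])
  then have "finite (\<Union>a\<in>Y. {k. f k = a})"
    using assms(2) by blast
  moreover have "{k. f k \<in> Y} = (\<Union>a\<in>Y. {k. f k = a})"
    by blast
  ultimately show ?thesis by simp
qed

lemma frequently_sequentially_subseqE:
  assumes "frequently P sequentially"
  obtains r :: "nat \<Rightarrow> nat" where "strict_mono r" "\<And>n. P (r n)"
proof -
  have "infinite {n. P n}"
    using assms by (simp add: frequently_cofinite cofinite_eq_sequentially[symmetric])
  then show ?thesis
    using infinite_enumerate that by blast
qed

lemma filterlim_sequentially_if_finite_fibres: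
  fixes f :: "nat \<Rightarrow> nat"
  assumes "\<And>m. finite {k. f k = m}"
  shows "filterlim f sequentially sequentially"
  unfolding filterlim_at_top
proof
  fix B
  have "{k. \<not> B \<le> f k} = (\<Union>m<B. {k. f k = m})"
    by auto
  then have "finite {k. \<not> B \<le> f k}"
    using assms by simp
  then show "eventually (\<lambda>k. B \<le> f k) sequentially"
    by (simp add: eventually_cofinite cofinite_eq_sequentially[symmetric])
qed

lemma strict_mono_subseq_of_eventually:
  assumes "\<And>i. eventually (Q i) sequentially"
  obtains r :: "nat \<Rightarrow> nat" where "strict_mono r" "\<And>n. Q (r n) (r (Suc n))"
proof -
  have "\<exists>j. i < j \<and> Q i j" for i
    using eventually_conj[OF eventually_gt_at_top[of i] assms[of i]]
    by (auto simp: eventually_sequentially)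
  then obtain r where "\<And>n. r n < r (Suc n) \<and> Q (r n) (r (Suc n))"
    using dependent_nat_choice[of "\<lambda>_ _. True" "\<lambda>_ i j. i < j \<and> Q i j"] by blast
  then show ?thesis
    using that by (metis strict_mono_Suc_iff)
qed

lemma common_strict_mono_subseq:
  fixes M N :: "nat \<Rightarrow> nat"
  assumes "filterlim M sequentially sequentially" and "filterlim N sequentially sequentially"
  obtains r :: "nat \<Rightarrow> nat" where "strict_mono r" "strict_mono (M \<circ> r)" "strict_mono (N \<circ> r)"
proof -
  have "eventually (\<lambda>j. M i < M j \<and> N i < N j) sequentially" for i
    using assms by (auto simp: filterlim_at_top Suc_le_eq[symmetric] intro!: eventually_conj)
  then obtain r where "strict_mono r" "\<And>n. M (r n) < M (r (Suc n)) \<and> N (r n) < N (r (Suc n))"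
    by (rule strict_mono_subseq_of_eventually[of "\<lambda>i j. M i < M j \<and> N i < N j"]) auto
  moreover from this(2) have "strict_mono (M \<circ> r)" "strict_mono (N \<circ> r)"
    by (simp_all add: strict_mono_Suc_iff)
  ultimately show ?thesis
    using that by blast
qed

lemma filterlim_outer_index_if_no_const_limit:
  fixes y :: "nat \<Rightarrow> nat \<Rightarrow> 'a" and N M :: "nat \<Rightarrow> nat"
  assumes "limitin X (\<lambda>k. y (N k) (M k)) l sequentially" and "\<And>k. M k < N k"
    and "\<And>k. \<not> limitin X (\<lambda>_. y (N k) (M k)) l sequentially"
  shows "filterlim N sequentially sequentially"
proof (rule filterlim_sequentially_if_finite_fibres)
  fix n
  let ?Y = "{a \<in> y n ` {..<n}. \<not> limitin X (\<lambda>_. a) l sequentially}"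
  have "finite {k. y (N k) (M k) \<in> ?Y}"
    using assms(1) by (rule finite_visits_if_no_const_limit) auto
  moreover have "{k. N k = n} \<subseteq> {k. y (N k) (M k) \<in> ?Y}"
    using assms(2,3) by auto
  ultimately show "finite {k. N k = n}"
    by (rule finite_subset[rotated])
qed

locale topgroup =
  fixes G :: "('a, 'b) monoid_scheme" (structure) and T :: "'a topology"
  assumes topological_group: "topological_group G T"

sublocale topgroup \<subseteq> group G
  using topological_group by (simp add: topological_group_def)

context topgroup
begin

lemma topspace_eq_carrier: "topspace T = carrier G"
  using topological_group by (simp add: topological_group_def)

lemma limitin_mult:
  assumes "limitin T a x F" and "limitin T b y F"
  shows "limitin T (\<lambda>i. a i \<otimes> b i) (x \<otimes> y) F"
proof -
  have "continuous_map (prod_topology T T) T (\<lambda>(x, y). x \<otimes> y)"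
    using topological_group by (simp add: topological_group_def)
  moreover have "limitin (prod_topology T T) (\<lambda>i. (a i, b i)) (x, y) F"
    using assms by (simp add: limitin_pairwise o_def)
  ultimately show ?thesis
    by (auto dest: continuous_map_limit simp: o_def)
qed

lemma limitin_inv:
  assumes "limitin T a x F"
  shows "limitin T (\<lambda>i. inv (a i)) (inv x) F"
proof -
  have "continuous_map T T (\<lambda>x. inv x)"
    using topological_group by (simp add: topological_group_def)
  from continuous_map_limit[OF this assms] show ?thesis
    by (simp add: o_def)
qed

lemma limitin_pow:
  assumes "limitin T a x F"
  shows "limitin T (\<lambda>i. a i [^] (m :: nat)) (x [^] m) F"
proof (induction m)
  case 0
  show ?case
    by (simp add: topspace_eq_carrier)
next
  case (Suc m)
  from limitin_mult[OF Suc assms] show ?case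
    by simp
qed

lemma limitin_cancel_left:
  assumes "limitin T a \<one> F" and "limitin T (\<lambda>i. a i \<otimes> b i) x F"
    and "\<And>i. a i \<in> carrier G" and "\<And>i. b i \<in> carrier G"
  shows "limitin T b x F"
proof -
  have "limitin T (\<lambda>i. inv (a i) \<otimes> (a i \<otimes> b i)) (inv \<one> \<otimes> x) F"
    using assms(1,2) by (intro limitin_mult limitin_inv)
  moreover have "x \<in> carrier G"
    using limitin_topspace[OF assms(2)] by (simp add: topspace_eq_carrier)
  ultimately show ?thesis
    using assms(3,4) by (simp add: m_assoc[symmetric])
qed

lemma limitin_cancel_right:
  assumes "limitin T (\<lambda>i. a i \<otimes> b i) x F" and "limitin T b \<one> F"
    and "\<And>i. a i \<in> carrier G" and "\<And>i. b i \<in> carrier G"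
  shows "limitin T a x F"
proof -
  have "limitin T (\<lambda>i. (a i \<otimes> b i) \<otimes> inv (b i)) (x \<otimes> inv \<one>) F"
    using assms(1,2) by (intro limitin_mult limitin_inv)
  moreover have "x \<in> carrier G"
    using limitin_topspace[OF assms(1)] by (simp add: topspace_eq_carrier)
  ultimately show ?thesis
    using assms(3,4) by (simp add: m_assoc)
qed

lemma power_subseq_if_frequently_const_limit:
  assumes "frequently (\<lambda>n. limitin T (\<lambda>_. g n) \<one> sequentially) sequentially"
  shows "\<exists>m k. strict_mono (m :: nat \<Rightarrow> nat) \<and> strict_mono (k :: nat \<Rightarrow> nat) \<and>
           limitin T (\<lambda>i. g (k i) [^] m i) \<one> sequentially"
proof -
  obtain k :: "nat \<Rightarrow> nat" where "strict_mono k" and k: "\<And>i. limitin T (\<lambda>_. g (k i)) \<one> sequentially"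
    using assms by (rule frequently_sequentially_subseqE) blast
  have "limitin T (\<lambda>_. g (k i) [^] i) \<one> sequentially" for i
    using limitin_pow[OF k, of i] by simp
  then have "limitin T (\<lambda>i. g (k i) [^] i) \<one> sequentially"
    by (rule limitin_if_const_limits)
  with \<open>strict_mono k\<close> show ?thesis
    by (intro exI[of _ id] exI[of _ k]) (simp add: strict_mono_def)
qed

context
  fixes g :: "nat \<Rightarrow> 'a" and n0 :: nat
  assumes g_carrier: "\<And>n. g n \<in> carrier G"
    and g_tendsto: "limitin T g \<one> sequentially"
    and g_no_const_limit: "\<And>n. n0 \<le> n \<Longrightarrow> \<not> limitin T (\<lambda>_. g n) \<one> sequentially"
begin

lemma eventually_twisted_power_no_const_limit:
  assumes "n0 \<le> m"
  shows "eventually (\<lambda>n. \<not> limitin T (\<lambda>_. g n [^] m \<otimes> g m) \<one> sequentially) sequentially"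
proof (rule ccontr)
  assume "\<not> ?thesis"
  then obtain r :: "nat \<Rightarrow> nat"
    where r: "strict_mono r" "\<And>i. limitin T (\<lambda>_. g (r i) [^] m \<otimes> g m) \<one> sequentially"
    by (auto simp: not_eventually elim: frequently_sequentially_subseqE)
  have "limitin T (\<lambda>i. g (r i) [^] m) \<one> sequentially"
    using limitin_pow[OF limitin_subsequence[OF r(1) g_tendsto], of m] by (simp add: o_def)
  moreover have "limitin T (\<lambda>i. g (r i) [^] m \<otimes> g m) \<one> sequentially"
    using r(2) by (rule limitin_if_const_limits)
  ultimately have "limitin T (\<lambda>_. g m) \<one> sequentially"
    by (rule limitin_cancel_left) (simp_all add: g_carrier)
  with g_no_const_limit assms show False
    by blast
qed

lemma one_in_closure_of_twisted_powers:
  "\<one> \<in> T closure_of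
     {g n [^] m \<otimes> g m | n m. n0 \<le> m \<and> m < n \<and> \<not> limitin T (\<lambda>_. g n [^] m \<otimes> g m) \<one> sequentially}"
  unfolding in_closure_of
proof (intro conjI allI impI)
  show "\<one> \<in> topspace T"
    by (simp add: topspace_eq_carrier)
  fix U
  assume U: "\<one> \<in> U \<and> openin T U"
  have "eventually (\<lambda>m. n0 \<le> m \<and> g m \<in> U) sequentially"
    using U by (intro eventually_conj eventually_ge_at_top limitinD[OF g_tendsto]) auto
  then obtain m where "n0 \<le> m" and "g m \<in> U"
    by (auto simp: eventually_sequentially)
  have "limitin T (\<lambda>n. g n [^] m) \<one> sequentially"
    using limitin_pow[OF g_tendsto, of m] by simp
  from limitin_mult[OF this, of "\<lambda>_. g m" "g m"]
  have "limitin T (\<lambda>n. g n [^] m \<otimes> g m) (g m) sequentially"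
    by (simp add: topspace_eq_carrier g_carrier)
  then have "eventually (\<lambda>n. g n [^] m \<otimes> g m \<in> U) sequentially"
    using U \<open>g m \<in> U\<close> by (auto intro: limitinD)
  moreover note eventually_twisted_power_no_const_limit[OF \<open>n0 \<le> m\<close>]
  moreover note eventually_gt_at_top[of m]
  ultimately have "eventually (\<lambda>n. g n [^] m \<otimes> g m \<in> U \<and>
      \<not> limitin T (\<lambda>_. g n [^] m \<otimes> g m) \<one> sequentially \<and> m < n) sequentially"
    by (intro eventually_conj)
  then obtain n where "g n [^] m \<otimes> g m \<in> U" "m < n"
    "\<not> limitin T (\<lambda>_. g n [^] m \<otimes> g m) \<one> sequentially"
    by (auto simp: eventually_sequentially)
  with \<open>n0 \<le> m\<close> show "\<exists>y. y \<in> {g n [^] m \<otimes> g m | n m. n0 \<le> m \<and> m < n \<and>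
      \<not> limitin T (\<lambda>_. g n [^] m \<otimes> g m) \<one> sequentially} \<and> y \<in> U"
    by blast
qed

lemma filterlim_inner_index_of_twisted_powers:
  assumes "limitin T (\<lambda>k. g (N k) [^] M k \<otimes> g (M k)) \<one> sequentially"
    and "filterlim N sequentially sequentially" and "\<And>k. n0 \<le> M k"
  shows "filterlim M sequentially sequentially"
proof (rule filterlim_sequentially_if_finite_fibres)
  fix m
  show "finite {k. M k = m}"
  proof (rule ccontr)
    assume "infinite {k. M k = m}"
    then obtain r :: "nat \<Rightarrow> nat" where r: "strict_mono r" "\<And>i. M (r i) = m"
      using infinite_enumerate by blast
    have "filterlim (N \<circ> r) sequentially sequentially"
      using filterlim_compose[OF assms(2) filterlim_subseq[OF r(1)]] by (simp add: o_def)
    from limitin_pow[OF limitin_compose_filterlim[OF g_tendsto this], of m]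
    have "limitin T (\<lambda>i. g (N (r i)) [^] m) \<one> sequentially"
      by (simp add: o_def)
    moreover have "limitin T (\<lambda>i. g (N (r i)) [^] m \<otimes> g m) \<one> sequentially"
      using limitin_subsequence[OF r(1) assms(1)] r(2) by (simp add: o_def)
    ultimately have "limitin T (\<lambda>_. g m) \<one> sequentially"
      by (rule limitin_cancel_left) (simp_all add: g_carrier)
    moreover have "n0 \<le> m"
      using assms(3) r(2) by metis
    ultimately show False
      using g_no_const_limit by blast
  qed
qed

lemma power_subseq_of_twisted_powers:
  assumes s: "limitin T (\<lambda>k. g (N k) [^] M k \<otimes> g (M k)) \<one> sequentially"
    and "\<And>k. n0 \<le> M k" and "\<And>k. M k < N k"
    and "\<And>k. \<not> limitin T (\<lambda>_. g (N k) [^] M k \<otimes> g (M k)) \<one> sequentially"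
  shows "\<exists>m k. strict_mono (m :: nat \<Rightarrow> nat) \<and> strict_mono (k :: nat \<Rightarrow> nat) \<and>
           limitin T (\<lambda>i. g (k i) [^] m i) \<one> sequentially"
proof -
  have N: "filterlim N sequentially sequentially"
    using filterlim_outer_index_if_no_const_limit[where y = "\<lambda>n m. g n [^] m \<otimes> g m"] s assms(3,4)
    by blast
  have M: "filterlim M sequentially sequentially"
    using s N assms(2) by (rule filterlim_inner_index_of_twisted_powers)
  obtain r :: "nat \<Rightarrow> nat" where r: "strict_mono r" "strict_mono (M \<circ> r)" "strict_mono (N \<circ> r)"
    using common_strict_mono_subseq[OF M N] .
  have "limitin T (\<lambda>i. g (N (r i)) [^] M (r i) \<otimes> g (M (r i))) \<one> sequentially"
    using limitin_subsequence[OF r(1) s] by (simp add: o_def)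
  moreover have "limitin T (\<lambda>i. g (M (r i))) \<one> sequentially"
    using limitin_subsequence[OF r(2) g_tendsto] by (simp add: o_def)
  ultimately have "limitin T (\<lambda>i. g (N (r i)) [^] M (r i)) \<one> sequentially"
    by (rule limitin_cancel_right) (simp_all add: g_carrier)
  with r(2,3) show ?thesis
    by (intro exI[of _ "M \<circ> r"] exI[of _ "N \<circ> r"]) (simp add: o_def)
qed

lemma power_subseq_if_Frechet_Urysohn:
  assumes "Frechet_Urysohn_space T"
  shows "\<exists>m k. strict_mono (m :: nat \<Rightarrow> nat) \<and> strict_mono (k :: nat \<Rightarrow> nat) \<and>
           limitin T (\<lambda>i. g (k i) [^] m i) \<one> sequentially"
proof -
  let ?A = "{g n [^] m \<otimes> g m | n m. n0 \<le> m \<and> m < n \<and>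
              \<not> limitin T (\<lambda>_. g n [^] m \<otimes> g m) \<one> sequentially}"
  have "?A \<subseteq> topspace T"
    by (auto simp: topspace_eq_carrier g_carrier)
  with assms one_in_closure_of_twisted_powers
  obtain s where s_in: "\<And>k. s k \<in> ?A" and s: "limitin T s \<one> sequentially"
    unfolding Frechet_Urysohn_space_def by blast
  have "\<forall>k. \<exists>n m. s k = g n [^] m \<otimes> g m \<and> n0 \<le> m \<and> m < n \<and>
           \<not> limitin T (\<lambda>_. g n [^] m \<otimes> g m) \<one> sequentially"
    using s_in by blast
  then obtain N M where NM: "\<forall>k. s k = g (N k) [^] M k \<otimes> g (M k) \<and> n0 \<le> M k \<and> M k < N k \<and>
      \<not> limitin T (\<lambda>_. g (N k) [^] M k \<otimes> g (M k)) \<one> sequentially"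
    unfolding choice_iff by blast
  then have "s = (\<lambda>k. g (N k) [^] M k \<otimes> g (M k))"
    by auto
  with s NM show ?thesis
    by (intro power_subseq_of_twisted_powers) auto
qed

end

end

theorem mainTheorem11:
  fixes G :: "('a, 'b) monoid_scheme" and T :: "'a topology"
  assumes "topological_group G T"
    and "Frechet_Urysohn_space T"
  shows "property_PS G T"
proof -
  interpret topgroup G T
    using assms(1) by unfold_locales
  show ?thesis
    unfolding property_PS_def
  proof (intro allI impI, elim conjE)
    fix g
    assume g_carrier: "\<forall>n. g n \<in> carrier G" and g_tendsto: "limitin T g \<one>\<^bsub>G\<^esub> sequentially"
    show "\<exists>m k. strict_mono (m :: nat \<Rightarrow> nat) \<and> strict_mono (k :: nat \<Rightarrow> nat) \<and>
            limitin T (\<lambda>i. g (k i) [^]\<^bsub>G\<^esub> m i) \<one>\<^bsub>G\<^esub> sequentially"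
    proof (cases "frequently (\<lambda>n. limitin T (\<lambda>_. g n) \<one>\<^bsub>G\<^esub> sequentially) sequentially")
      case True
      then show ?thesis
        by (rule power_subseq_if_frequently_const_limit)
    next
      case False
      then obtain n0 where "\<And>n. n0 \<le> n \<Longrightarrow> \<not> limitin T (\<lambda>_. g n) \<one>\<^bsub>G\<^esub> sequentially"
        by (auto simp: not_frequently eventually_sequentially)
      with g_carrier g_tendsto assms(2) show ?thesis
        using power_subseq_if_Frechet_Urysohn by blast
    qed
  qed
qed

end
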